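(* Let $G$ be a profinite-$C$ group, let $H$ be a closed subgroup of $G$ and let $N$ be a closed normal subgroup of $G$. Then: (i) If $S$ is a closed subgroup of $G$ with $G=HS$, then $S$ contains a closed permutable complement of $H$ in $G$. (ii) If $S$ is a closed subgroup of $G$ containing $N$ such that $S/N$ is a closed permutable complement of $HN/N$ in $G/N$, then there exists a closed permutable complement $K$ of $H$ in $G$ such that $S=KN$.
   Context: A permutable complement of a subgroup $H$ of a group $G$ is a subgroup $K$ with $G=HK$ and $H\cap K=1$. A profinite group $G$ is a profinite-$C$ group if every closed subgroup of $G$ has a closed permutable complement in $G$. *)

theory Defs
  imports "HOL-Analysis.Analysis" "HOL-Algebra.Coset"
begin

definition topological_group :: "('a, 'b) monoid_scheme \<Rightarrow> 'a topology \<Rightarrow> bool" where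
  "topological_group G T \<longleftrightarrow> group G \<and> topspace T = carrier G \<and>
     continuous_map (prod_topology T T) T (\<lambda>(x, y). x \<otimes>\<^bsub>G\<^esub> y) \<and>
     continuous_map T T (\<lambda>x. inv\<^bsub>G\<^esub> x)"

text \<open>Profinite group: compact, Hausdorff, totally disconnected topological group
(the standard characterisation of inverse limits of finite groups).\<close>
definition profinite_group :: "('a, 'b) monoid_scheme \<Rightarrow> 'a topology \<Rightarrow> bool" where
  "profinite_group G T \<longleftrightarrow> topological_group G T \<and> compact_space T \<and> Hausdorff_space T \<and>
     (\<forall>x \<in> topspace T. connected_component_of_set T x = {x})"

definition closed_subgroup :: "('a, 'b) monoid_scheme \<Rightarrow> 'a topology \<Rightarrow> 'a set \<Rightarrow> bool" where
  "closed_subgroup G T H \<longleftrightarrow> subgroup H G \<and> closedin T H"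

definition perm_complement :: "('a, 'b) monoid_scheme \<Rightarrow> 'a set \<Rightarrow> 'a set \<Rightarrow> bool" where
  "perm_complement G H K \<longleftrightarrow> subgroup K G \<and> H <#>\<^bsub>G\<^esub> K = carrier G \<and> H \<inter> K = {\<one>\<^bsub>G\<^esub>}"

definition profinite_C :: "('a, 'b) monoid_scheme \<Rightarrow> 'a topology \<Rightarrow> bool" where
  "profinite_C G T \<longleftrightarrow> profinite_group G T \<and>
     (\<forall>H. closed_subgroup G T H \<longrightarrow> (\<exists>K. closed_subgroup G T K \<and> perm_complement G H K))"

definition quot_topology :: "('a, 'b) monoid_scheme \<Rightarrow> 'a topology \<Rightarrow> 'a set \<Rightarrow> 'a set topology" where
  "quot_topology G T N = topology (\<lambda>U. U \<subseteq> rcosets\<^bsub>G\<^esub> N \<and> openin T (\<Union>U))"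

definition quot_image :: "('a, 'b) monoid_scheme \<Rightarrow> 'a set \<Rightarrow> 'a set \<Rightarrow> 'a set set" where
  "quot_image G N A = (\<lambda>a. N #>\<^bsub>G\<^esub> a) ` A"

end

theory Submission
  imports Defs
begin

text \<open>Part (i) is a Dedekind-law argument: if L is a closed complement of H \<inter> S,
then S \<inter> L is a closed complement of H contained in S. For part (ii), the hypothesis on
G/N says exactly that HS = G and H \<inter> S \<subseteq> N; a complement K \<subseteq> S of H from part (i)
then satisfies S = (H \<inter> S)K \<subseteq> NK = KN \<subseteq> S.\<close>

lemma set_multI:
  assumes "a \<in> A" "b \<in> B" "x = a \<otimes>\<^bsub>G\<^esub> b"
  shows "x \<in> A <#>\<^bsub>G\<^esub> B"
  using assms unfolding set_mult_def by blast

lemma set_multE: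
  assumes "x \<in> A <#>\<^bsub>G\<^esub> B"
  obtains a b where "a \<in> A" "b \<in> B" "x = a \<otimes>\<^bsub>G\<^esub> b"
  using assms unfolding set_mult_def by blast

lemma (in group) perm_complement_Int:
  assumes sH: "subgroup H G" and sS: "subgroup S G" and HS: "H <#> S = carrier G"
    and L: "perm_complement G (H \<inter> S) L"
  shows "perm_complement G H (S \<inter> L)"
proof -
  have sL: "subgroup L G" and HSL: "(H \<inter> S) <#> L = carrier G" and trivial: "H \<inter> S \<inter> L = {\<one>}"
    using L unfolding perm_complement_def by auto
  have "carrier G \<subseteq> H <#> (S \<inter> L)"
  proof
    fix g assume "g \<in> carrier G"
    then obtain h s where h: "h \<in> H" and s: "s \<in> S" and g_eq: "g = h \<otimes> s"
      using HS by (metis set_multE)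
    have "s \<in> (H \<inter> S) <#> L"
      using HSL s subgroup.mem_carrier[OF sS] by blast
    then obtain d l where d: "d \<in> H \<inter> S" and l: "l \<in> L" and s_eq: "s = d \<otimes> l"
      by (rule set_multE)
    have [simp]: "h \<in> carrier G" "d \<in> carrier G" "l \<in> carrier G"
      using h d l subgroup.mem_carrier[OF sH] subgroup.mem_carrier[OF sL] by auto
    have "l = inv d \<otimes> s"
      using s_eq by (simp add: m_assoc[symmetric])
    then have "l \<in> S"
      using d s sS by (simp add: subgroup.m_closed subgroup.m_inv_closed)
    moreover have "h \<otimes> d \<in> H"
      using h d sH by (simp add: subgroup.m_closed)
    moreover have "g = (h \<otimes> d) \<otimes> l"
      using g_eq s_eq by (simp add: m_assoc)
    ultimately show "g \<in> H <#> (S \<inter> L)"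
      using l by (blast intro: set_multI)
  qed
  moreover have "H <#> (S \<inter> L) \<subseteq> carrier G"
    using set_mult_closed subgroup.subset[OF sH] subgroup.subset[OF sS] by blast
  ultimately show ?thesis
    using trivial subgroups_Inter_pair[OF sS sL] unfolding perm_complement_def by blast
qed

lemma profinite_C_group: "profinite_C G T \<Longrightarrow> group G"
  unfolding profinite_C_def profinite_group_def topological_group_def by blast

lemma (in group) closed_subgroup_Int:
  "closed_subgroup G T H \<Longrightarrow> closed_subgroup G T S \<Longrightarrow> closed_subgroup G T (H \<inter> S)"
  unfolding closed_subgroup_def by (auto intro: subgroups_Inter_pair)

lemma profinite_C_complement_in_supplement:
  assumes C: "profinite_C G T" and H: "closed_subgroup G T H" and S: "closed_subgroup G T S"
    and HS: "H <#>\<^bsub>G\<^esub> S = carrier G"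
  shows "\<exists>K. K \<subseteq> S \<and> closed_subgroup G T K \<and> perm_complement G H K"
proof -
  interpret group G using C by (rule profinite_C_group)
  obtain L where L: "closed_subgroup G T L" and compl: "perm_complement G (H \<inter> S) L"
    using C closed_subgroup_Int[OF H S] unfolding profinite_C_def by blast
  have "perm_complement G H (S \<inter> L)"
    using perm_complement_Int[OF _ _ HS compl] H S unfolding closed_subgroup_def by blast
  moreover have "closed_subgroup G T (S \<inter> L)"
    using closed_subgroup_Int[OF S L] .
  ultimately show ?thesis by blast
qed

lemma supplement_of_quotient_supplement:
  fixes G (structure)
  assumes N: "N \<lhd> G" and sH: "subgroup H G" and sS: "subgroup S G" and NS: "N \<subseteq> S"
    and quot: "quot_image G N (H <#> N) <#>\<^bsub>G Mod N\<^esub> quot_image G N S = carrier (G Mod N)"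
  shows "H <#> S = carrier G"
proof
  interpret normal N G by (rule N)
  show "H <#> S \<subseteq> carrier G"
    using set_mult_closed subgroup.subset[OF sH] subgroup.subset[OF sS] by blast
  show "carrier G \<subseteq> H <#> S"
  proof
    fix g assume g: "g \<in> carrier G"
    then have "N #> g \<in> carrier (G Mod N)"
      by (simp add: carrier_FactGroup)
    then have "N #> g \<in> quot_image G N (H <#> N) <#>\<^bsub>G Mod N\<^esub> quot_image G N S"
      using quot by simp
    then obtain X Y where "X \<in> quot_image G N (H <#> N)" "Y \<in> quot_image G N S"
      and "N #> g = X <#> Y"
      by (auto elim!: set_multE)
    then obtain x s where x: "x \<in> H <#> N" and s: "s \<in> S"
      and g_coset: "N #> g = (N #> x) <#> (N #> s)"
      unfolding quot_image_def by blast
    obtain h n' where h: "h \<in> H" and n': "n' \<in> N" and x_eq: "x = h \<otimes> n'"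
      using x by (rule set_multE)
    have [simp]: "h \<in> carrier G" "n' \<in> carrier G" "s \<in> carrier G"
      using h n' s subgroup.mem_carrier[OF sH] subgroup.mem_carrier[OF sS] subset by auto
    have "N #> g = N #> (x \<otimes> s)"
      using g_coset x_eq by (simp add: rcos_sum)
    then have "g \<in> N #> (x \<otimes> s)"
      using rcos_self[OF g subgroup_axioms] by simp
    then obtain n where n: "n \<in> N" and g_eq: "g = n \<otimes> (x \<otimes> s)"
      unfolding r_coset_def by blast
    have [simp]: "n \<in> carrier G"
      using n subset by auto
    have "g = h \<otimes> ((inv h \<otimes> n \<otimes> h) \<otimes> n' \<otimes> s)"
      using g_eq x_eq by (simp add: m_assoc[symmetric])
    moreover have "(inv h \<otimes> n \<otimes> h) \<otimes> n' \<otimes> s \<in> S"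
      using inv_op_closed1[of h n] n n' s NS subgroup.m_closed[OF sS] by auto
    ultimately show "g \<in> H <#> S"
      using h by (blast intro: set_multI)
  qed
qed

lemma Int_subset_of_quotient_Int:
  fixes G (structure)
  assumes N: "N \<lhd> G" and sH: "subgroup H G"
    and quot: "quot_image G N (H <#> N) \<inter> quot_image G N S = {N}"
  shows "H \<inter> S \<subseteq> N"
proof
  interpret normal N G by (rule N)
  fix y assume y: "y \<in> H \<inter> S"
  then have yG: "y \<in> carrier G"
    using subgroup.mem_carrier[OF sH] by blast
  then have "y \<in> H <#> N"
    using y subgroup.one_closed[OF subgroup_axioms] by (auto intro!: set_multI[of y H \<one> N])
  then have "N #> y \<in> quot_image G N (H <#> N) \<inter> quot_image G N S"
    using y unfolding quot_image_def by blast
  then have "N #> y = N"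
    using quot by blast
  then show "y \<in> N"
    using rcos_self[OF yG subgroup_axioms] by simp
qed

lemma eq_complement_set_mult_normal:
  fixes G (structure)
  assumes N: "N \<lhd> G" and sH: "subgroup H G" and sS: "subgroup S G" and sK: "subgroup K G"
    and NS: "N \<subseteq> S" and KS: "K \<subseteq> S"
    and HK: "H <#> K = carrier G" and HSN: "H \<inter> S \<subseteq> N"
  shows "S = K <#> N"
proof
  interpret normal N G by (rule N)
  show "K <#> N \<subseteq> S"
  proof
    fix x assume "x \<in> K <#> N"
    then obtain k n where "k \<in> K" "n \<in> N" "x = k \<otimes> n"
      by (rule set_multE)
    then show "x \<in> S"
      using KS NS subgroup.m_closed[OF sS] by blast
  qed
  show "S \<subseteq> K <#> N"
  proof
    fix s assume s: "s \<in> S"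
    then have "s \<in> H <#> K"
      using HK subgroup.mem_carrier[OF sS] by blast
    then obtain h k where h: "h \<in> H" and k: "k \<in> K" and s_eq: "s = h \<otimes> k"
      by (rule set_multE)
    have [simp]: "h \<in> carrier G" "k \<in> carrier G"
      using h k subgroup.mem_carrier[OF sH] subgroup.mem_carrier[OF sK] by auto
    have "h = s \<otimes> inv k"
      using s_eq by (simp add: m_assoc)
    then have "h \<in> S"
      using s k KS subgroup.m_closed[OF sS] subgroup.m_inv_closed[OF sS] by auto
    then have "inv k \<otimes> h \<otimes> k \<in> N"
      using h HSN inv_op_closed1[of k h] by auto
    moreover have "s = k \<otimes> (inv k \<otimes> h \<otimes> k)"
      using s_eq by (simp add: m_assoc[symmetric])
    ultimately show "s \<in> K <#> N"
      using k by (blast intro: set_multI)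
  qed
qed

theorem lemma2p2:
  fixes G :: "('a, 'b) monoid_scheme" and T :: "'a topology"
  assumes "profinite_C G T"
    and "closed_subgroup G T H"
    and "closed_subgroup G T N" and "N \<lhd> G"
  shows "(\<forall>S. closed_subgroup G T S \<and> H <#>\<^bsub>G\<^esub> S = carrier G \<longrightarrow>
            (\<exists>K. K \<subseteq> S \<and> closed_subgroup G T K \<and> perm_complement G H K))
       \<and> (\<forall>S. closed_subgroup G T S \<and> N \<subseteq> S \<and>
            closed_subgroup (G Mod N) (quot_topology G T N) (quot_image G N S) \<and>
            perm_complement (G Mod N) (quot_image G N (H <#>\<^bsub>G\<^esub> N)) (quot_image G N S) \<longrightarrow>
            (\<exists>K. closed_subgroup G T K \<and> perm_complement G H K \<and> S = K <#>\<^bsub>G\<^esub> N))"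
proof (intro conjI allI impI)
  show "\<exists>K. K \<subseteq> S \<and> closed_subgroup G T K \<and> perm_complement G H K"
    if "closed_subgroup G T S \<and> H <#>\<^bsub>G\<^esub> S = carrier G" for S
    using that profinite_C_complement_in_supplement[OF assms(1,2)] by blast
next
  fix S
  assume "closed_subgroup G T S \<and> N \<subseteq> S \<and>
    closed_subgroup (G Mod N) (quot_topology G T N) (quot_image G N S) \<and>
    perm_complement (G Mod N) (quot_image G N (H <#>\<^bsub>G\<^esub> N)) (quot_image G N S)"
  then have S: "closed_subgroup G T S" and NS: "N \<subseteq> S"
    and quot: "perm_complement (G Mod N) (quot_image G N (H <#>\<^bsub>G\<^esub> N)) (quot_image G N S)"
    by auto
  have sH: "subgroup H G" and sS: "subgroup S G"
    using assms(2) S unfolding closed_subgroup_def by auto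
  have HS: "H <#>\<^bsub>G\<^esub> S = carrier G" and HSN: "H \<inter> S \<subseteq> N"
    using supplement_of_quotient_supplement[OF assms(4) sH sS NS]
      Int_subset_of_quotient_Int[OF assms(4) sH] quot
    unfolding perm_complement_def by (auto simp: FactGroup_def)
  obtain K where KS: "K \<subseteq> S" and K: "closed_subgroup G T K" and compl: "perm_complement G H K"
    using profinite_C_complement_in_supplement[OF assms(1,2) S HS] by blast
  then have "S = K <#>\<^bsub>G\<^esub> N"
    using eq_complement_set_mult_normal[OF assms(4) sH sS _ NS KS _ HSN]
    unfolding closed_subgroup_def perm_complement_def by blast
  with K compl show "\<exists>K. closed_subgroup G T K \<and> perm_complement G H K \<and> S = K <#>\<^bsub>G\<^esub> N"
    by blast
qed

end
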